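(* Let $\mathcal{B}$ be a real Banach space with dual $\mathcal{B}^*$, let $\nu_j\in\mathcal{B}^*$, $j\in\mathbb{N}_m$, be linearly independent and let $\mathbf{y}\in\mathbb{R}^m$. Then $\hat f\in\mathcal{B}$ is a solution of the minimum norm interpolation problem with data $\mathbf{y}$ if and only if $\hat f\in\mathcal{M}_{\mathbf{y}}$ and there exist $c_j\in\mathbb{R}$, $j\in\mathbb{N}_m$, such that $$\hat f\in\gamma\,\partial\|\cdot\|_{\mathcal{B}^*}\Big(\sum_{j\in\mathbb{N}_m}c_j\nu_j\Big),\qquad \gamma:=\Big\|\sum_{j\in\mathbb{N}_m}c_j\nu_j\Big\|_{\mathcal{B}^*},$$ where $\hat f$ is identified with its canonical image in $\mathcal{B}^{**}$.
   Context: $\mathcal{B}$ is a real Banach space with dual $\mathcal{B}^*$ and pairing $\langle\nu,f\rangle_{\mathcal{B}}:=\nu(f)$; $\mathbb{N}_m:=\{1,\dots,m\}$; $\mathcal{L}(f):=[\langle\nu_j,f\rangle_{\mathcal{B}}:j\in\mathbb{N}_m]$, $\mathcal{M}_{\mathbf{y}}:=\{f\in\mathcal{B}:\mathcal{L}(f)=\mathbf{y}\}$; a solution of the minimum norm interpolation problem with data $\mathbf{y}$ is an $\hat f\in\mathcal{M}_{\mathbf{y}}$ with $\|\hat f\|_{\mathcal{B}}=\inf\{\|f\|_{\mathcal{B}}:f\in\mathcal{M}_{\mathbf{y}}\}$. For a convex $\phi$ on a real normed space $X$, $\partial\phi(f):=\{\nu\in X^*:\phi(g)-\phi(f)\ge\nu(g-f)\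 \forall g\in X\}$; so $\partial\|\cdot\|_{\mathcal{B}^*}(\nu)\subseteq\mathcal{B}^{**}$. *)

theory Defs
  imports "HOL-Analysis.Analysis"
begin

definition subdifferential :: "('b::real_normed_vector \<Rightarrow> real) \<Rightarrow> 'b \<Rightarrow> ('b \<Rightarrow>\<^sub>L real) set" where
  "subdifferential phi f = {nu. \<forall>g. phi g - phi f \<ge> blinfun_apply nu (g - f)}"

definition canon_embed :: "'a::real_normed_vector \<Rightarrow> (('a \<Rightarrow>\<^sub>L real) \<Rightarrow>\<^sub>L real)" where
  "canon_embed f = Blinfun (\<lambda>nu. blinfun_apply nu f)"

definition interp_set :: "nat \<Rightarrow> (nat \<Rightarrow> ('a::real_normed_vector \<Rightarrow>\<^sub>L real)) \<Rightarrow> (nat \<Rightarrow> real) \<Rightarrow> 'a set" where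
  "interp_set m nu y = {f. \<forall>j\<in>{1..m}. blinfun_apply (nu j) f = y j}"

definition is_mni_solution :: "nat \<Rightarrow> (nat \<Rightarrow> ('a::real_normed_vector \<Rightarrow>\<^sub>L real)) \<Rightarrow> (nat \<Rightarrow> real) \<Rightarrow> 'a \<Rightarrow> bool" where
  "is_mni_solution m nu y f \<longleftrightarrow>
     f \<in> interp_set m nu y \<and> norm f = Inf (norm ` interp_set m nu y)"

end

theory Submission
  imports Defs
begin

text \<open>Write \<open>v = (\<Sum>j. c j *\<^sub>R nu j)\<close>. A functional \<open>\<Phi>\<close> lies in the subdifferential of
  the norm at \<open>v\<close> iff \<open>norm \<Phi> \<le> 1\<close> and \<open>\<Phi> v = norm v\<close>. If \<open>\<nu> f = norm v * \<Phi> \<nu>\<close> for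
  all \<open>\<nu>\<close>, then \<open>norm f \<le> norm v\<close> and \<open>v h = v f = norm v ^ 2\<close> for every interpolant \<open>h\<close>,
  while \<open>v h \<le> norm v * norm h\<close>; hence \<open>f\<close> has minimal norm. Conversely, a minimal \<open>f\<close>
  has norm equal to its quotient norm modulo the common kernel \<open>K\<close> of the \<open>nu j\<close>.
  Hahn--Banach for that sublinear quotient norm gives \<open>\<psi>\<close> with \<open>norm \<psi> \<le> 1\<close>,
  \<open>\<psi> f = norm f\<close> and \<open>\<psi>\<close> vanishing on \<open>K\<close>, so \<open>\<psi>\<close> is a linear combination of the
  \<open>nu j\<close>, and \<open>v = norm f *\<^sub>R \<psi>\<close> is the required combination.\<close>

section \<open>Hahn--Banach for sublinear functionals\<close>

definition sublinear :: "('a::real_vector \<Rightarrow> real) \<Rightarrow> bool" where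
  "sublinear p \<longleftrightarrow>
     (\<forall>x y. p (x + y) \<le> p x + p y) \<and> (\<forall>r x. 0 \<le> r \<longrightarrow> p (r *\<^sub>R x) = r * p x)"

lemma sublinearD:
  assumes "sublinear p"
  shows sublinear_add: "p (x + y) \<le> p x + p y"
    and sublinear_scaleR: "0 \<le> r \<Longrightarrow> p (r *\<^sub>R x) = r * p x"
  using assms unfolding sublinear_def by blast+

lemma sublinear_zero: "sublinear p \<Longrightarrow> p 0 = 0"
  using sublinear_scaleR[of p 0 0] by simp

text \<open>A set of pairs closed under linear combinations is a linear relation; domination by
  a sublinear \<open>p\<close> forces it to be the graph of a linear functional on its domain
  (see \<open>dominated_linear_graph_unique\<close>).\<close>

definition dominated_linear_graph :: "('a::real_vector \<Rightarrow> real) \<Rightarrow> ('a \<times> real) set \<Rightarrow> bool" where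
  "dominated_linear_graph p G \<longleftrightarrow>
     (\<forall>x a y b r s. (x, a) \<in> G \<longrightarrow> (y, b) \<in> G \<longrightarrow> (r *\<^sub>R x + s *\<^sub>R y, r * a + s * b) \<in> G) \<and>
     (\<forall>x a. (x, a) \<in> G \<longrightarrow> a \<le> p x)"

lemma dominated_linear_graphD:
  assumes "dominated_linear_graph p G"
  shows dominated_linear_graph_comb:
      "(x, a) \<in> G \<Longrightarrow> (y, b) \<in> G \<Longrightarrow> (r *\<^sub>R x + s *\<^sub>R y, r * a + s * b) \<in> G"
    and dominated_linear_graph_le: "(x, a) \<in> G \<Longrightarrow> a \<le> p x"
  using assms unfolding dominated_linear_graph_def by blast+

lemma dominated_linear_graph_scaleR:
  "dominated_linear_graph p G \<Longrightarrow> (x, a) \<in> G \<Longrightarrow> (r *\<^sub>R x, r * a) \<in> G"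
  using dominated_linear_graph_comb[of p G x a x a r 0] by simp

lemma dominated_linear_graph_line:
  assumes p: "sublinear p"
  shows "dominated_linear_graph p (range (\<lambda>t. (t *\<^sub>R x0, t * p x0)))"
  unfolding dominated_linear_graph_def
proof (intro conjI allI impI)
  fix x a y b r s
  assume "(x, a) \<in> range (\<lambda>t. (t *\<^sub>R x0, t * p x0))" "(y, b) \<in> range (\<lambda>t. (t *\<^sub>R x0, t * p x0))"
  then obtain t1 t2 where "x = t1 *\<^sub>R x0" "a = t1 * p x0" "y = t2 *\<^sub>R x0" "b = t2 * p x0"
    by auto
  then show "(r *\<^sub>R x + s *\<^sub>R y, r * a + s * b) \<in> range (\<lambda>t. (t *\<^sub>R x0, t * p x0))"
    by (intro range_eqI[of _ _ "r * t1 + s * t2"]) (simp add: algebra_simps)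
next
  fix x a assume "(x, a) \<in> range (\<lambda>t. (t *\<^sub>R x0, t * p x0))"
  then obtain t where t: "x = t *\<^sub>R x0" "a = t * p x0" by auto
  show "a \<le> p x"
  proof (cases "t \<ge> 0")
    case True
    then show ?thesis using t sublinear_scaleR[OF p] by simp
  next
    case False
    have "- p x0 \<le> p (- x0)"
      using sublinear_add[OF p, of x0 "- x0"] sublinear_zero[OF p] by simp
    then have "(- t) * (- p x0) \<le> (- t) * p (- x0)"
      using False by (intro mult_left_mono) auto
    also have "\<dots> = p x"
      using t False sublinear_scaleR[OF p, of "- t" "- x0"] by simp
    finally show ?thesis using t by simp
  qed
qed

lemma dominated_linear_graph_Union_chain:
  assumes "subset.chain {G. dominated_linear_graph p G} C"
  shows "dominated_linear_graph p (\<Union>C)"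
proof -
  have C: "\<And>G. G \<in> C \<Longrightarrow> dominated_linear_graph p G"
    and tot: "\<And>X Y. X \<in> C \<Longrightarrow> Y \<in> C \<Longrightarrow> X \<subseteq> Y \<or> Y \<subseteq> X"
    using assms unfolding subset.chain_def by auto
  show ?thesis
    unfolding dominated_linear_graph_def
  proof (intro conjI allI impI)
    fix x a y b r s assume "(x, a) \<in> \<Union>C" "(y, b) \<in> \<Union>C"
    then obtain X Y where "X \<in> C" "(x, a) \<in> X" "Y \<in> C" "(y, b) \<in> Y" by auto
    moreover from this obtain Z where "Z \<in> C" "X \<subseteq> Z" "Y \<subseteq> Z"
      using tot by blast
    ultimately have "(x, a) \<in> Z" "(y, b) \<in> Z" by auto
    then have "(r *\<^sub>R x + s *\<^sub>R y, r * a + s * b) \<in> Z"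
      by (rule dominated_linear_graph_comb[OF C[OF \<open>Z \<in> C\<close>]])
    then show "(r *\<^sub>R x + s *\<^sub>R y, r * a + s * b) \<in> \<Union>C"
      using \<open>Z \<in> C\<close> by blast
  next
    fix x a assume "(x, a) \<in> \<Union>C"
    then obtain X where "X \<in> C" "(x, a) \<in> X" by auto
    then show "a \<le> p x" by (rule dominated_linear_graph_le[OF C])
  qed
qed

text \<open>The one-dimensional extension step: the admissible values at \<open>z\<close> form a nonempty
  interval, because every lower bound lies below every upper bound by subadditivity.\<close>

lemma hahn_banach_extension_value:
  assumes p: "sublinear p" and G: "dominated_linear_graph p G" "G \<noteq> {}"
  obtains c where "\<And>u a. (u, a) \<in> G \<Longrightarrow> a - p (u - z) \<le> c"
    and "\<And>w b. (w, b) \<in> G \<Longrightarrow> c \<le> p (w + z) - b"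
proof -
  have lower_le_upper: "a - p (u - z) \<le> p (w + z) - b" if "(u, a) \<in> G" "(w, b) \<in> G" for u a w b
  proof -
    have "a + b \<le> p (u + w)"
      using dominated_linear_graph_le[OF G(1) dominated_linear_graph_comb[OF G(1) that, of 1 1]]
      by simp
    also have "\<dots> = p ((u - z) + (w + z))" by (simp add: algebra_simps)
    also have "\<dots> \<le> p (u - z) + p (w + z)" by (rule sublinear_add[OF p])
    finally show ?thesis by simp
  qed
  define L where "L = {a - p (u - z) | u a. (u, a) \<in> G}"
  obtain w b where wb: "(w, b) \<in> G" using G(2) by auto
  then have "L \<noteq> {}" unfolding L_def by auto
  moreover have "bdd_above L"
    using lower_le_upper[OF _ wb] unfolding L_def by (intro bdd_aboveI[of _ "p (w + z) - b"]) auto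
  ultimately show thesis
    by (intro that[of "Sup L"] cSup_upper cSup_least) (auto simp: L_def lower_le_upper)
qed

lemma hahn_banach_extension_dominated:
  assumes p: "sublinear p" and G: "dominated_linear_graph p G"
    and lower: "\<And>u a. (u, a) \<in> G \<Longrightarrow> a - p (u - z) \<le> c"
    and upper: "\<And>w b. (w, b) \<in> G \<Longrightarrow> c \<le> p (w + z) - b"
    and xa: "(x, a) \<in> G"
  shows "a + t * c \<le> p (x + t *\<^sub>R z)"
proof -
  consider "t = 0" | "t > 0" | "t < 0" by linarith
  then show ?thesis
  proof cases
    case 1
    then show ?thesis using dominated_linear_graph_le[OF G xa] by simp
  next
    case 2
    have "c \<le> p ((1 / t) *\<^sub>R x + z) - a / t"
      using upper[OF dominated_linear_graph_scaleR[OF G xa, of "1 / t"]] by simp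
    then have "a + t * c \<le> t * p ((1 / t) *\<^sub>R x + z)"
      using 2 by (simp add: field_simps)
    also have "\<dots> = p (t *\<^sub>R ((1 / t) *\<^sub>R x + z))"
      using 2 by (simp add: sublinear_scaleR[OF p])
    also have "t *\<^sub>R ((1 / t) *\<^sub>R x + z) = x + t *\<^sub>R z"
      using 2 by (simp add: scaleR_add_right)
    finally show ?thesis .
  next
    case 3
    have "a / (- t) - p ((1 / - t) *\<^sub>R x - z) \<le> c"
      using lower[OF dominated_linear_graph_scaleR[OF G xa, of "1 / - t"]] by simp
    then have "a + t * c \<le> (- t) * p ((1 / - t) *\<^sub>R x - z)"
      using 3 by (simp add: field_simps)
    also have "\<dots> = p ((- t) *\<^sub>R ((1 / - t) *\<^sub>R x - z))"
      by (rule sublinear_scaleR[OF p, symmetric]) (use 3 in simp)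
    also have "(- t) *\<^sub>R ((1 / - t) *\<^sub>R x - z) = x + t *\<^sub>R z"
      using 3 by (simp add: scaleR_diff_right)
    finally show ?thesis .
  qed
qed

lemma dominated_linear_graph_extend:
  assumes p: "sublinear p" and G: "dominated_linear_graph p G" "G \<noteq> {}"
  obtains c where "dominated_linear_graph p {(x + t *\<^sub>R z, a + t * c) | x a t. (x, a) \<in> G}"
proof -
  obtain c where lower: "\<And>u a. (u, a) \<in> G \<Longrightarrow> a - p (u - z) \<le> c"
    and upper: "\<And>w b. (w, b) \<in> G \<Longrightarrow> c \<le> p (w + z) - b"
    using hahn_banach_extension_value[OF p G] by blast
  show thesis
  proof (rule that[of c], unfold dominated_linear_graph_def, intro conjI allI impI)
    fix x a y b r s
    assume "(x, a) \<in> {(x + t *\<^sub>R z, a + t * c) | x a t. (x, a) \<in> G}"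
      "(y, b) \<in> {(x + t *\<^sub>R z, a + t * c) | x a t. (x, a) \<in> G}"
    then obtain x1 a1 t1 x2 a2 t2 where "(x1, a1) \<in> G" "x = x1 + t1 *\<^sub>R z" "a = a1 + t1 * c"
      "(x2, a2) \<in> G" "y = x2 + t2 *\<^sub>R z" "b = a2 + t2 * c"
      by blast
    note xy = this
    then have "(r *\<^sub>R x1 + s *\<^sub>R x2, r * a1 + s * a2) \<in> G"
      using dominated_linear_graph_comb[OF G(1)] by blast
    moreover have "r *\<^sub>R x + s *\<^sub>R y = (r *\<^sub>R x1 + s *\<^sub>R x2) + (r * t1 + s * t2) *\<^sub>R z"
      and "r * a + s * b = (r * a1 + s * a2) + (r * t1 + s * t2) * c"
      using xy by (simp_all add: algebra_simps)
    ultimately show "(r *\<^sub>R x + s *\<^sub>R y, r * a + s * b) \<in> {(x + t *\<^sub>R z, a + t * c) | x a t. (x, a) \<in> G}"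
      by blast
  next
    fix x a assume "(x, a) \<in> {(x + t *\<^sub>R z, a + t * c) | x a t. (x, a) \<in> G}"
    then show "a \<le> p x"
      using hahn_banach_extension_dominated[OF p G(1) lower upper] by blast
  qed
qed

lemma dominated_linear_graph_unique:
  assumes p: "sublinear p" and G: "dominated_linear_graph p G"
    and "(x, a) \<in> G" "(x, b) \<in> G"
  shows "a = b"
proof -
  have "a - b \<le> p 0" "b - a \<le> p 0"
    using dominated_linear_graph_le[OF G dominated_linear_graph_comb[OF G assms(3,4), of 1 "- 1"]]
      dominated_linear_graph_le[OF G dominated_linear_graph_comb[OF G assms(4,3), of 1 "- 1"]]
    by simp_all
  then show ?thesis using sublinear_zero[OF p] by simp
qed

lemma dominated_linear_graph_total_functional:
  assumes p: "sublinear p" and G: "dominated_linear_graph p G" and total: "\<And>x. \<exists>a. (x, a) \<in> G"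
  obtains \<phi> where "linear \<phi>" "\<And>x. \<phi> x \<le> p x" "\<And>x a. (x, a) \<in> G \<Longrightarrow> \<phi> x = a"
proof -
  define \<phi> where "\<phi> x = (THE a. (x, a) \<in> G)" for x
  have \<phi>_eq: "\<phi> x = a" if "(x, a) \<in> G" for x a
    unfolding \<phi>_def using that dominated_linear_graph_unique[OF p G] by blast
  have \<phi>_mem: "(x, \<phi> x) \<in> G" for x
    using total[of x] \<phi>_eq by auto
  have "linear \<phi>"
  proof (rule linearI)
    show "\<phi> (x + y) = \<phi> x + \<phi> y" for x y
      using \<phi>_eq[OF dominated_linear_graph_comb[OF G \<phi>_mem \<phi>_mem, of 1 x 1 y]] by simp
    show "\<phi> (r *\<^sub>R x) = r *\<^sub>R \<phi> x" for r x
      using \<phi>_eq[OF dominated_linear_graph_scaleR[OF G \<phi>_mem, of r x]] by simp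
  qed
  then show thesis
    using that \<phi>_eq dominated_linear_graph_le[OF G \<phi>_mem] by blast
qed

lemma dominated_linear_graph_maximal_total:
  assumes p: "sublinear p" and M: "dominated_linear_graph p M" "M \<noteq> {}"
    and max: "\<And>G. dominated_linear_graph p G \<Longrightarrow> M \<subseteq> G \<Longrightarrow> G = M"
  shows "\<exists>a. (z, a) \<in> M"
proof -
  obtain c where ext: "dominated_linear_graph p {(x + t *\<^sub>R z, a + t * c) | x a t. (x, a) \<in> M}"
    using dominated_linear_graph_extend[OF p M] by blast
  have "(u, v) \<in> {(x + t *\<^sub>R z, a + t * c) | x a t. (x, a) \<in> M}" if "(u, v) \<in> M" for u v
  proof -
    have "(u + 0 *\<^sub>R z, v + 0 * c) \<in> {(x + t *\<^sub>R z, a + t * c) | x a t. (x, a) \<in> M}"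
      using that by blast
    then show ?thesis by simp
  qed
  then have "M \<subseteq> {(x + t *\<^sub>R z, a + t * c) | x a t. (x, a) \<in> M}" by auto
  then have "{(x + t *\<^sub>R z, a + t * c) | x a t. (x, a) \<in> M} = M"
    by (rule max[OF ext])
  moreover obtain x0 a0 where "(x0, a0) \<in> M" using M(2) by auto
  then have "(0, 0) \<in> M"
    using dominated_linear_graph_scaleR[OF M(1), of x0 a0 0] by simp
  then have "(0 + 1 *\<^sub>R z, 0 + 1 * c) \<in> {(x + t *\<^sub>R z, a + t * c) | x a t. (x, a) \<in> M}"
    by blast
  ultimately show ?thesis by auto
qed

theorem hahn_banach_sublinear:
  assumes p: "sublinear p"
  obtains \<phi> where "linear \<phi>" "\<And>x. \<phi> x \<le> p x" "\<phi> x0 = p x0"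
proof -
  define A where "A = {G. dominated_linear_graph p G \<and> (x0, p x0) \<in> G}"
  have "(x0, p x0) \<in> range (\<lambda>t. (t *\<^sub>R x0, t * p x0))"
    by (rule range_eqI[of _ _ 1]) simp
  then have "A \<noteq> {}"
    unfolding A_def using dominated_linear_graph_line[OF p] by blast
  moreover have "\<Union>C \<in> A" if "C \<noteq> {}" "subset.chain A C" for C
  proof -
    have CA: "C \<subseteq> A" using that(2) by (simp add: subset.chain_def)
    then have "subset.chain {G. dominated_linear_graph p G} C"
      using that(2) by (auto simp: subset.chain_def A_def)
    then have "dominated_linear_graph p (\<Union>C)"
      by (rule dominated_linear_graph_Union_chain)
    moreover have "(x0, p x0) \<in> \<Union>C" using that(1) CA by (auto simp: A_def)
    ultimately show ?thesis by (simp add: A_def)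
  qed
  ultimately obtain M where "M \<in> A" and max: "\<And>G. G \<in> A \<Longrightarrow> M \<subseteq> G \<Longrightarrow> G = M"
    using subset_Zorn_nonempty[of A] by blast
  then have M: "dominated_linear_graph p M" "(x0, p x0) \<in> M" by (simp_all add: A_def)
  have "\<exists>a. (z, a) \<in> M" for z
    by (rule dominated_linear_graph_maximal_total[OF p M(1)])
      (use M(2) max in \<open>auto simp: A_def\<close>)
  then obtain \<phi> where "linear \<phi>" "\<And>x. \<phi> x \<le> p x" "\<And>x a. (x, a) \<in> M \<Longrightarrow> \<phi> x = a"
    by (rule dominated_linear_graph_total_functional[OF p M(1)]) blast
  then show thesis using that M(2) by blast
qed

section \<open>Quotient norms and norming functionals\<close>

definition quot_norm :: "'a::real_normed_vector set \<Rightarrow> 'a \<Rightarrow> real" where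
  "quot_norm K g = Inf ((\<lambda>k. norm (g + k)) ` K)"

lemma quot_norm_le: "k \<in> K \<Longrightarrow> quot_norm K g \<le> norm (g + k)"
  unfolding quot_norm_def by (rule cInf_lower) (auto intro: bdd_belowI[of _ 0])

lemma quot_norm_greatest:
  "K \<noteq> {} \<Longrightarrow> (\<And>k. k \<in> K \<Longrightarrow> a \<le> norm (g + k)) \<Longrightarrow> a \<le> quot_norm K g"
  unfolding quot_norm_def by (rule cInf_greatest) auto

lemma quot_norm_single_0 [simp]: "quot_norm {0} g = norm g"
  by (simp add: quot_norm_def)

lemma quot_norm_triangle_ineq:
  assumes K: "subspace K"
  shows "quot_norm K (g1 + g2) \<le> quot_norm K g1 + quot_norm K g2"
proof -
  have K_ne: "K \<noteq> {}" using subspace_0[OF K] by blast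
  have "quot_norm K (g1 + g2) - norm (g2 + k2) \<le> quot_norm K g1" if k2: "k2 \<in> K" for k2
  proof (rule quot_norm_greatest[OF K_ne])
    fix k1 assume k1: "k1 \<in> K"
    have "quot_norm K (g1 + g2) \<le> norm ((g1 + k1) + (g2 + k2))"
      using quot_norm_le[OF subspace_add[OF K k1 k2], of "g1 + g2"] by (simp add: algebra_simps)
    also have "\<dots> \<le> norm (g1 + k1) + norm (g2 + k2)" by (rule norm_triangle_ineq)
    finally show "quot_norm K (g1 + g2) - norm (g2 + k2) \<le> norm (g1 + k1)" by simp
  qed
  then have "quot_norm K (g1 + g2) - quot_norm K g1 \<le> quot_norm K g2"
    by (intro quot_norm_greatest[OF K_ne]) force
  then show ?thesis by simp
qed

lemma quot_norm_zero:
  assumes K: "subspace K"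
  shows "quot_norm K 0 = 0"
proof (rule antisym)
  show "quot_norm K 0 \<le> 0"
    using quot_norm_le[OF subspace_0[OF K], of 0] by simp
  show "0 \<le> quot_norm K 0"
    by (rule quot_norm_greatest) (use subspace_0[OF K] in auto)
qed

lemma quot_norm_scaleR:
  assumes K: "subspace K" and r: "r > 0"
  shows "quot_norm K (r *\<^sub>R g) = r * quot_norm K g"
proof (rule antisym)
  have K_ne: "K \<noteq> {}" using subspace_0[OF K] by blast
  have "quot_norm K (r *\<^sub>R g) / r \<le> quot_norm K g"
  proof (rule quot_norm_greatest[OF K_ne])
    fix k assume "k \<in> K"
    then have "quot_norm K (r *\<^sub>R g) \<le> norm (r *\<^sub>R g + r *\<^sub>R k)"
      by (intro quot_norm_le subspace_scale[OF K])
    also have "\<dots> = r * norm (g + k)" using r by (simp flip: scaleR_add_right)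
    finally show "quot_norm K (r *\<^sub>R g) / r \<le> norm (g + k)" using r by (simp add: field_simps)
  qed
  then show "quot_norm K (r *\<^sub>R g) \<le> r * quot_norm K g"
    using r by (simp add: field_simps)
  show "r * quot_norm K g \<le> quot_norm K (r *\<^sub>R g)"
  proof (rule quot_norm_greatest[OF K_ne])
    fix k assume "k \<in> K"
    then have "quot_norm K g \<le> norm (g + (1 / r) *\<^sub>R k)"
      by (intro quot_norm_le subspace_scale[OF K])
    also have "\<dots> = norm ((1 / r) *\<^sub>R (r *\<^sub>R g + k))"
      using r by (simp add: scaleR_add_right)
    also have "\<dots> = norm (r *\<^sub>R g + k) / r"
      using r by simp
    finally show "r * quot_norm K g \<le> norm (r *\<^sub>R g + k)"
      using r by (simp add: field_simps)
  qed
qed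

lemma sublinear_quot_norm:
  assumes K: "subspace K"
  shows "sublinear (quot_norm K)"
proof -
  have "quot_norm K (r *\<^sub>R g) = r * quot_norm K g" if "0 \<le> r" for r g
    using that quot_norm_zero[OF K] quot_norm_scaleR[OF K, of r g]
    by (cases "r = 0") simp_all
  then show ?thesis
    using quot_norm_triangle_ineq[OF K] by (simp add: sublinear_def)
qed

lemma exists_blinfun_vanishing_on_subspace:
  fixes K :: "'a::real_normed_vector set"
  assumes K: "subspace K"
  obtains \<psi> :: "'a \<Rightarrow>\<^sub>L real"
  where "norm \<psi> \<le> 1" "\<And>k. k \<in> K \<Longrightarrow> \<psi> k = 0" "\<psi> f = quot_norm K f"
proof -
  obtain \<phi> where lin: "linear \<phi>" and le: "\<And>x. \<phi> x \<le> quot_norm K x" and "\<phi> f = quot_norm K f"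
    using hahn_banach_sublinear[OF sublinear_quot_norm[OF K]] by blast
  have le_norm: "\<phi> x \<le> norm x" for x
    using le[of x] quot_norm_le[OF subspace_0[OF K], of x] by simp
  have abs_le: "\<bar>\<phi> x\<bar> \<le> norm x" for x
    using le_norm[of x] le_norm[of "- x"] linear_neg[OF lin, of x] by simp
  have "bounded_linear \<phi>"
    by (rule bounded_linear_intro[where K = 1]) (use lin abs_le in \<open>auto simp: linear_add linear_scale\<close>)
  moreover have "\<phi> k = 0" if "k \<in> K" for k
  proof -
    have "\<phi> k \<le> 0" "\<phi> (- k) \<le> 0"
      using le[of k] le[of "- k"] quot_norm_le[OF subspace_neg[OF K that], of k]
        quot_norm_le[OF that, of "- k"] by simp_all
    then show ?thesis using linear_neg[OF lin, of k] by simp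
  qed
  ultimately show thesis
    using that[of "Blinfun \<phi>"] abs_le \<open>\<phi> f = quot_norm K f\<close>
    by (simp add: bounded_linear_Blinfun_apply norm_blinfun_bound)
qed

lemma exists_norming_blinfun:
  fixes f :: "'a::real_normed_vector"
  obtains \<psi> :: "'a \<Rightarrow>\<^sub>L real" where "norm \<psi> \<le> 1" "\<psi> f = norm f"
  using exists_blinfun_vanishing_on_subspace[OF subspace_single_0, of f] by auto

lemma canon_embed_apply [simp]: "canon_embed f \<nu> = \<nu> f"
  unfolding canon_embed_def
  by (simp add: bounded_linear_Blinfun_apply[OF blinfun.bounded_linear_left])

lemma norm_canon_embed [simp]: "norm (canon_embed f) = norm f"
proof (rule antisym)
  show "norm (canon_embed f) \<le> norm f"
  proof (rule norm_blinfun_bound)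
    show "norm (canon_embed f \<nu>) \<le> norm f * norm \<nu>" for \<nu> :: "'a \<Rightarrow>\<^sub>L real"
      using norm_blinfun[of \<nu> f] by (simp add: mult.commute)
  qed simp
  obtain \<psi> :: "'a \<Rightarrow>\<^sub>L real" where "norm \<psi> \<le> 1" "\<psi> f = norm f"
    by (rule exists_norming_blinfun)
  then have "norm f \<le> norm (canon_embed f) * norm \<psi>"
    using norm_blinfun[of "canon_embed f" \<psi>] by simp
  also have "\<dots> \<le> norm (canon_embed f)"
    using \<open>norm \<psi> \<le> 1\<close> by (simp add: mult_left_le)
  finally show "norm f \<le> norm (canon_embed f)" .
qed

lemma subdifferential_norm_iff:
  fixes v :: "'b::real_normed_vector"
  shows "\<Phi> \<in> subdifferential norm v \<longleftrightarrow> norm \<Phi> \<le> 1 \<and> \<Phi> v = norm v"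
proof
  assume "\<Phi> \<in> subdifferential norm v"
  then have sd: "\<Phi> (g - v) \<le> norm g - norm v" for g
    by (simp add: subdifferential_def)
  have le: "\<Phi> h \<le> norm h" for h
    using sd[of "h + v"] norm_triangle_ineq[of h v] by simp
  have "\<bar>\<Phi> h\<bar> \<le> norm h" for h
    using le[of h] le[of "- h"] by (auto simp: blinfun.minus_right)
  then have "norm \<Phi> \<le> 1"
    by (intro norm_blinfun_bound) simp_all
  moreover have "norm v \<le> \<Phi> v"
    using sd[of 0] by (simp add: blinfun.minus_right)
  ultimately show "norm \<Phi> \<le> 1 \<and> \<Phi> v = norm v"
    using le[of v] by simp
next
  assume \<Phi>: "norm \<Phi> \<le> 1 \<and> \<Phi> v = norm v"
  have "\<Phi> g \<le> norm g" for g
    using norm_blinfun[of \<Phi> g] mult_left_le_one_le[of "norm g" "norm \<Phi>"] \<Phi> by simp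
  then have "\<Phi> (g - v) \<le> norm g - norm v" for g
    using \<Phi> by (simp add: blinfun.diff_right)
  then show "\<Phi> \<in> subdifferential norm v"
    by (simp add: subdifferential_def)
qed

section \<open>Functionals vanishing on a common kernel\<close>

lemma biorthogonal_projection_kernel:
  fixes S :: "('a::real_normed_vector \<Rightarrow>\<^sub>L real) set"
  assumes "finite S"
    and e: "\<And>\<mu> \<nu>. \<mu> \<in> S \<Longrightarrow> \<nu> \<in> S \<Longrightarrow> \<mu> (e \<nu>) = (if \<mu> = \<nu> then 1 else 0)"
    and "\<mu> \<in> S"
  shows "\<mu> (x - (\<Sum>\<nu>\<in>S. blinfun_apply \<nu> x *\<^sub>R e \<nu>)) = 0"
proof -
  have "(\<Sum>\<nu>\<in>S. blinfun_apply \<nu> x * \<mu> (e \<nu>)) = (\<Sum>\<nu>\<in>S. if \<nu> = \<mu> then blinfun_apply \<nu> x else 0)"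
    using e[OF \<open>\<mu> \<in> S\<close>] by (intro sum.cong) auto
  also have "\<dots> = \<mu> x" using assms(1,3) by simp
  finally show ?thesis
    by (simp add: blinfun.diff_right blinfun.sum_right blinfun.scaleR_right)
qed

lemma exists_biorthogonal_extension:
  fixes S :: "('a::real_normed_vector \<Rightarrow>\<^sub>L real) set"
  assumes "finite S"
    and e: "\<And>\<mu> \<nu>. \<mu> \<in> S \<Longrightarrow> \<nu> \<in> S \<Longrightarrow> \<mu> (e \<nu>) = (if \<mu> = \<nu> then 1 else 0)"
    and "\<nu>0 \<notin> span S"
  obtains e0 where "\<nu>0 e0 = 1" "\<And>\<mu>. \<mu> \<in> S \<Longrightarrow> \<mu> e0 = 0"
proof -
  \<comment> \<open>\<open>P\<close> projects onto the common kernel of \<open>S\<close>, where \<open>\<nu>0\<close> agrees with \<open>\<psi>\<close>; and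
    \<open>\<psi> \<noteq> 0\<close> because \<open>\<nu>0 \<notin> span S\<close>.\<close>
  define P where "P x = x - (\<Sum>\<mu>\<in>S. blinfun_apply \<mu> x *\<^sub>R e \<mu>)" for x
  define \<psi> where "\<psi> = \<nu>0 - (\<Sum>\<mu>\<in>S. \<nu>0 (e \<mu>) *\<^sub>R \<mu>)"
  have "\<psi> \<noteq> 0"
  proof
    assume "\<psi> = 0"
    then have "\<nu>0 = (\<Sum>\<mu>\<in>S. \<nu>0 (e \<mu>) *\<^sub>R \<mu>)" by (simp add: \<psi>_def)
    also have "\<dots> \<in> span S" by (intro span_sum span_scale span_base)
    finally show False using assms(3) by simp
  qed
  then obtain x where x: "\<psi> x \<noteq> 0"
    by (metis blinfun_eqI zero_blinfun.rep_eq)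
  have "\<nu>0 (P x) = \<psi> x"
    by (simp add: P_def \<psi>_def blinfun.diff_right blinfun.sum_right blinfun.scaleR_right
        blinfun.diff_left blinfun.sum_left blinfun.scaleR_left mult.commute)
  with x show thesis
    using biorthogonal_projection_kernel[OF assms(1) e]
    by (intro that[of "(1 / \<psi> x) *\<^sub>R P x"]) (simp_all add: P_def blinfun.scaleR_right)
qed

lemma exists_biorthogonal_system:
  fixes S :: "('a::real_normed_vector \<Rightarrow>\<^sub>L real) set"
  assumes "finite S" "independent S"
  shows "\<exists>e :: ('a \<Rightarrow>\<^sub>L real) \<Rightarrow> 'a. \<forall>\<mu>\<in>S. \<forall>\<nu>\<in>S. blinfun_apply \<mu> (e \<nu>) = (if \<mu> = \<nu> then 1 else 0)"
  using assms
proof (induction S rule: finite_induct)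
  case empty
  then show ?case by simp
next
  case (insert \<nu>0 S)
  then have "independent S" "\<nu>0 \<notin> span S"
    by (auto simp: independent_insert)
  then obtain e where e: "\<And>\<mu> \<nu>. \<mu> \<in> S \<Longrightarrow> \<nu> \<in> S \<Longrightarrow> \<mu> (e \<nu>) = (if \<mu> = \<nu> then 1 else 0)"
    using insert.IH by blast
  obtain e0 where e0: "\<nu>0 e0 = 1" "\<And>\<mu>. \<mu> \<in> S \<Longrightarrow> \<mu> e0 = 0"
    using exists_biorthogonal_extension[OF insert.hyps(1) e \<open>\<nu>0 \<notin> span S\<close>] by blast
  define e' where "e' \<nu> = (if \<nu> = \<nu>0 then e0 else e \<nu> - \<nu>0 (e \<nu>) *\<^sub>R e0)" for \<nu>
  have "\<mu> (e' \<nu>) = (if \<mu> = \<nu> then 1 else 0)" if "\<mu> \<in> insert \<nu>0 S" "\<nu> \<in> insert \<nu>0 S" for \<mu> \<nu>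
    using that e e0 insert.hyps(2)
    by (auto simp: e'_def blinfun.diff_right blinfun.scaleR_right)
  then show ?case by blast
qed

lemma in_span_if_common_kernel_subset:
  fixes S :: "('a::real_normed_vector \<Rightarrow>\<^sub>L real) set" and \<psi> :: "'a \<Rightarrow>\<^sub>L real"
  assumes "finite S" "independent S"
    and ker: "\<And>k. (\<And>\<mu>. \<mu> \<in> S \<Longrightarrow> \<mu> k = 0) \<Longrightarrow> \<psi> k = 0"
  shows "\<psi> \<in> span S"
proof -
  obtain e where e: "\<And>\<mu> \<nu>. \<mu> \<in> S \<Longrightarrow> \<nu> \<in> S \<Longrightarrow> \<mu> (e \<nu>) = (if \<mu> = \<nu> then 1 else 0)"
    using exists_biorthogonal_system[OF assms(1,2)] by blast
  have "\<psi> = (\<Sum>\<mu>\<in>S. \<psi> (e \<mu>) *\<^sub>R \<mu>)"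
  proof (rule blinfun_eqI)
    fix x
    have "\<psi> (x - (\<Sum>\<mu>\<in>S. blinfun_apply \<mu> x *\<^sub>R e \<mu>)) = 0"
      by (rule ker) (rule biorthogonal_projection_kernel[OF assms(1) e])
    then show "\<psi> x = (\<Sum>\<mu>\<in>S. \<psi> (e \<mu>) *\<^sub>R \<mu>) x"
      by (simp add: blinfun.diff_right blinfun.sum_right blinfun.scaleR_right
          blinfun.sum_left blinfun.scaleR_left mult.commute)
  qed
  also have "\<dots> \<in> span S" by (intro span_sum span_scale span_base)
  finally show ?thesis .
qed

section \<open>Minimum norm interpolation\<close>

lemma is_mni_solution_iff_minimal:
  "is_mni_solution m nu y f \<longleftrightarrow>
     f \<in> interp_set m nu y \<and> (\<forall>h \<in> interp_set m nu y. norm f \<le> norm h)"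
proof -
  have "bdd_below (norm ` interp_set m nu y)" by (rule bdd_belowI[of _ 0]) auto
  then show ?thesis
    unfolding is_mni_solution_def by (auto intro: cInf_eq_minimum[symmetric] cInf_lower[OF imageI])
qed

lemma is_mni_solution_if_subgradient_certificate:
  fixes nu :: "nat \<Rightarrow> ('a::real_normed_vector \<Rightarrow>\<^sub>L real)"
  assumes f: "f \<in> interp_set m nu y"
    and \<Phi>: "\<Phi> \<in> subdifferential norm (\<Sum>j=1..m. c j *\<^sub>R nu j)"
    and canon: "canon_embed f = norm (\<Sum>j=1..m. c j *\<^sub>R nu j) *\<^sub>R \<Phi>"
  shows "is_mni_solution m nu y f"
proof -
  define v where "v = (\<Sum>j=1..m. c j *\<^sub>R nu j)"
  have \<Phi>v: "norm \<Phi> \<le> 1" "\<Phi> v = norm v"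
    using \<Phi> by (simp_all add: subdifferential_norm_iff v_def)
  have f_le_v: "norm f \<le> norm v"
    using arg_cong[OF canon, of norm] mult_right_le_one_le[OF norm_ge_zero norm_ge_zero \<Phi>v(1)]
    by (simp add: v_def)
  have v_f: "v f = norm v * norm v"
    using arg_cong[OF canon, of "\<lambda>F. F v"] \<Phi>v(2) by (simp add: v_def blinfun.scaleR_left)
  have "norm f \<le> norm h" if h: "h \<in> interp_set m nu y" for h
  proof -
    have "v h = v f"
      using h f by (simp add: v_def interp_set_def blinfun.sum_left blinfun.scaleR_left)
    then have "norm v * norm v \<le> norm v * norm h"
      using v_f norm_blinfun[of v h] by simp
    then show ?thesis
      using f_le_v by (cases "norm v = 0") (auto simp: mult_le_cancel_left)
  qed
  then show ?thesis using f by (simp add: is_mni_solution_iff_minimal)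
qed

lemma canon_embed_in_scaled_subdifferential:
  fixes f :: "'a::real_normed_vector" and \<psi> :: "'a \<Rightarrow>\<^sub>L real"
  assumes \<psi>: "norm \<psi> \<le> 1" "\<psi> f = norm f"
  shows "canon_embed f \<in> (\<lambda>\<Phi>. norm (norm f *\<^sub>R \<psi>) *\<^sub>R \<Phi>) ` subdifferential norm (norm f *\<^sub>R \<psi>)"
proof (cases "f = 0")
  case True
  have "0 \<in> subdifferential norm (0 :: 'a \<Rightarrow>\<^sub>L real)"
    by (simp add: subdifferential_norm_iff)
  moreover have "canon_embed f = 0"
    using True by (intro blinfun_eqI) simp
  ultimately show ?thesis using True by force
next
  case False
  have "norm f \<le> norm \<psi> * norm f"
    using norm_blinfun[of \<psi> f] \<psi>(2) by simp
  then have "norm \<psi> = 1" using \<psi>(1) False by simp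
  define \<Phi> where "\<Phi> = (1 / norm f) *\<^sub>R canon_embed f"
  have "\<Phi> \<in> subdifferential norm (norm f *\<^sub>R \<psi>)"
    using False \<psi>(2) \<open>norm \<psi> = 1\<close>
    by (simp add: subdifferential_norm_iff \<Phi>_def blinfun.scaleR_right blinfun.scaleR_left)
  moreover have "canon_embed f = norm (norm f *\<^sub>R \<psi>) *\<^sub>R \<Phi>"
    using False \<open>norm \<psi> = 1\<close> by (simp add: \<Phi>_def)
  ultimately show ?thesis by blast
qed

lemma mni_solution_has_subgradient_certificate:
  fixes nu :: "nat \<Rightarrow> ('a::real_normed_vector \<Rightarrow>\<^sub>L real)"
  assumes inj: "inj_on nu {1..m}" and indep: "independent (nu ` {1..m})"
    and sol: "is_mni_solution m nu y f"
  shows "\<exists>c. canon_embed f \<in> (\<lambda>\<Phi>. norm (\<Sum>j=1..m. c j *\<^sub>R nu j) *\<^sub>R \<Phi>) `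
      subdifferential norm (\<Sum>j=1..m. c j *\<^sub>R nu j)"
proof -
  define K where "K = {k. \<forall>j\<in>{1..m}. nu j k = 0}"
  have K: "subspace K"
    by (auto simp: K_def subspace_def blinfun.add_right blinfun.scaleR_right)
  have f: "f \<in> interp_set m nu y" and min: "\<And>h. h \<in> interp_set m nu y \<Longrightarrow> norm f \<le> norm h"
    using sol by (simp_all add: is_mni_solution_iff_minimal)
  have "quot_norm K f = norm f"
  proof (rule antisym)
    show "quot_norm K f \<le> norm f"
      using quot_norm_le[OF subspace_0[OF K], of f] by simp
    show "norm f \<le> quot_norm K f"
    proof (rule quot_norm_greatest)
      show "K \<noteq> {}" using subspace_0[OF K] by blast
      fix k assume "k \<in> K"
      then have "f + k \<in> interp_set m nu y"
        using f by (simp add: K_def interp_set_def blinfun.add_right)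
      then show "norm f \<le> norm (f + k)" by (rule min)
    qed
  qed
  then obtain \<psi> :: "'a \<Rightarrow>\<^sub>L real" where \<psi>: "norm \<psi> \<le> 1" "\<And>k. k \<in> K \<Longrightarrow> \<psi> k = 0" "\<psi> f = norm f"
    using exists_blinfun_vanishing_on_subspace[OF K, of f] by metis
  have "\<psi> \<in> span (nu ` {1..m})"
    by (rule in_span_if_common_kernel_subset[OF _ indep]) (auto simp: \<psi>(2) K_def)
  then obtain a where "\<psi> = (\<Sum>\<mu>\<in>nu ` {1..m}. a \<mu> *\<^sub>R \<mu>)"
    by (auto simp: span_finite)
  also have "\<dots> = (\<Sum>j=1..m. a (nu j) *\<^sub>R nu j)"
    using sum.reindex[OF inj, of "\<lambda>\<mu>. a \<mu> *\<^sub>R \<mu>"] by simp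
  finally have "(\<Sum>j=1..m. (norm f * a (nu j)) *\<^sub>R nu j) = norm f *\<^sub>R \<psi>"
    by (simp add: scaleR_sum_right)
  then show ?thesis
    using canon_embed_in_scaled_subdifferential[OF \<psi>(1,3)] by (intro exI[of _ "\<lambda>j. norm f * a (nu j)"]) simp
qed

theorem mainTheorem5:
  fixes nu :: "nat \<Rightarrow> ('a::banach \<Rightarrow>\<^sub>L real)" and m :: nat and y :: "nat \<Rightarrow> real" and f :: 'a
  assumes "inj_on nu {1..m}" and "independent (nu ` {1..m})"
  shows "is_mni_solution m nu y f \<longleftrightarrow>
    (f \<in> interp_set m nu y \<and>
     (\<exists>c :: nat \<Rightarrow> real.
        let \<gamma> = norm (\<Sum>j=1..m. c j *\<^sub>R nu j) in
        canon_embed f \<in> (\<lambda>\<Phi>. \<gamma> *\<^sub>R \<Phi>) ` subdifferential norm (\<Sum>j=1..m. c j *\<^sub>R nu j)))"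
proof
  assume sol: "is_mni_solution m nu y f"
  then show "f \<in> interp_set m nu y \<and>
     (\<exists>c :: nat \<Rightarrow> real.
        let \<gamma> = norm (\<Sum>j=1..m. c j *\<^sub>R nu j) in
        canon_embed f \<in> (\<lambda>\<Phi>. \<gamma> *\<^sub>R \<Phi>) ` subdifferential norm (\<Sum>j=1..m. c j *\<^sub>R nu j))"
    using mni_solution_has_subgradient_certificate[OF assms sol]
    by (auto simp: is_mni_solution_def Let_def)
next
  assume "f \<in> interp_set m nu y \<and>
     (\<exists>c :: nat \<Rightarrow> real.
        let \<gamma> = norm (\<Sum>j=1..m. c j *\<^sub>R nu j) in
        canon_embed f \<in> (\<lambda>\<Phi>. \<gamma> *\<^sub>R \<Phi>) ` subdifferential norm (\<Sum>j=1..m. c j *\<^sub>R nu j))"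
  then show "is_mni_solution m nu y f"
    by (auto simp: Let_def intro: is_mni_solution_if_subgradient_certificate)
qed

end
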